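(* Let $r=r(n)\ge 2$ with $r=o(n^{2/5})$. Let $\mathcal D$ be the event that there exists an $r$-subset of $[n]$ which intersects each of $e_1,\dots,e_{3r}$ but is disjoint from $\bigcap_{j=1}^{3r}e_j$. Then $\Pr(\mathcal D\mid\mathcal B_{3r}\cap\mathcal A_4)=o(1)$ as $n\to\infty$.
   Context: Random intersecting process: Let $[n]=\{1,\dots,n\}$ and $\binom{[n]}{r}$ the family of $r$-subsets of $[n]$. Choose $e_1$ uniformly at random from $\binom{[n]}{r}$. Given $\mathcal F_i=\{e_1,\dots,e_i\}$, let $\mathcal A(\mathcal F_i)=\{e\in\binom{[n]}{r}: e\notin\mathcal F_i,\ e\cap e_j\neq\emptyset \text{ for all } 1\le j\le i\}$, and choose $e_{i+1}$ uniformly at random from $\mathcal A(\mathcal F_i)$. The process halts when $\mathcal A(\mathcal F_i)=\emptyset$. A star is a collection of sets such that every pair of them has the same one-element intersection $\{x\}$ ($x$ is the kernel); a single set is a $1$-star by convention. For $i\ge1$, $\mathcal A_i$ is the event that at least $i$ edges are chosen and $\mathcal F_i$ is an $i$-star. For $i\ge3$, $\mathcal B_i$ is the event that at least $i$ edges are chosen and $\bigcap_{j=1}^i e_j\neq\emptyset$. *)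

theory Defs
  imports "HOL-Probability.Probability" "HOL-Library.Landau_Symbols"
begin

definition adm :: "nat \<Rightarrow> nat \<Rightarrow> nat set list \<Rightarrow> nat set set" where
  "adm n r F = {e. e \<subseteq> {1..n} \<and> card e = r \<and> e \<notin> set F \<and> (\<forall>f\<in>set F. e \<inter> f \<noteq> {})}"

primrec proc :: "nat \<Rightarrow> nat \<Rightarrow> nat \<Rightarrow> nat set list pmf" where
  "proc n r 0 = return_pmf []"
| "proc n r (Suc k) = bind_pmf (proc n r k)
     (\<lambda>F. if adm n r F = {} then return_pmf F
          else map_pmf (\<lambda>e. F @ [e]) (pmf_of_set (adm n r F)))"

definition is_star :: "nat \<Rightarrow> nat set list \<Rightarrow> bool" where
  "is_star i F \<longleftrightarrow> (\<exists>x. \<forall>j<i. \<forall>k<i. j \<noteq> k \<longrightarrow> F ! j \<inter> F ! k = {x})"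

definition evA :: "nat \<Rightarrow> nat set list \<Rightarrow> bool" where
  "evA i F \<longleftrightarrow> i \<le> length F \<and> is_star i F"

definition evB :: "nat \<Rightarrow> nat set list \<Rightarrow> bool" where
  "evB i F \<longleftrightarrow> i \<le> length F \<and> \<Inter> (set (take i F)) \<noteq> {}"

definition evD :: "nat \<Rightarrow> nat \<Rightarrow> nat set list \<Rightarrow> bool" where
  "evD n r F \<longleftrightarrow> (\<exists>s. s \<subseteq> {1..n} \<and> card s = r \<and>
       (\<forall>j<3*r. s \<inter> F ! j \<noteq> {}) \<and> s \<inter> \<Inter> (set (take (3*r) F)) = {})"

end

theory Submission
  imports Defs
begin

text \<open>Condition on the first four edges H. If they form a star with kernel x, then a common
  point of e_1, ..., e_3r lies in e_1 \<inter> e_2 = {x}, so on B_3r every later edge passes through x.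
  An r-set s witnessing D avoids x and meets the four petals e_j - {x}; there are at most
  (r-1)^4 C(n-5, r-4) such s. Among the roughly C(n-1, r-1) admissible edges through x, at most
  r C(n-2, r-2) meet a fixed s, so each of the remaining 3r - 4 edges passes through x and meets s
  with probability at most about r^2/n. On the other hand, as an admissible edge missing x has to
  meet e_1, e_2, e_3, each later edge passes through x with probability close to 1. A union bound
  over s gives a conditional probability of order r^4 n^(r-4)/(r-4)! (16 r^2/n)^(3r-4), which
  tends to 0 when r^5 = o(n^2).\<close>

section \<open>Counting r-sets and elementary estimates\<close>

lemma card_supersets:
  assumes "finite U" "T \<subseteq> U" "card T \<le> r"
  shows "card {e. e \<subseteq> U \<and> card e = r \<and> T \<subseteq> e} = (card U - card T) choose (r - card T)"
proof -
  have fT: "finite T" using assms finite_subset by blast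
  have "bij_betw (\<lambda>e. e - T) {e. e \<subseteq> U \<and> card e = r \<and> T \<subseteq> e} {B. B \<subseteq> U - T \<and> card B = r - card T}"
  proof (rule bij_betwI[where g="\<lambda>B. B \<union> T"])
    show "(\<lambda>e. e - T) \<in> {e. e \<subseteq> U \<and> card e = r \<and> T \<subseteq> e} \<rightarrow> {B. B \<subseteq> U - T \<and> card B = r - card T}"
      using fT by (auto simp: card_Diff_subset)
    show "(\<lambda>B. B \<union> T) \<in> {B. B \<subseteq> U - T \<and> card B = r - card T} \<rightarrow> {e. e \<subseteq> U \<and> card e = r \<and> T \<subseteq> e}"
    proof
      fix B assume B: "B \<in> {B. B \<subseteq> U - T \<and> card B = r - card T}"
      have "finite B" using B assms(1) finite_subset by blast
      then have "card (B \<union> T) = card B + card T" using B fT by (subst card_Un_disjoint) auto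
      then show "B \<union> T \<in> {e. e \<subseteq> U \<and> card e = r \<and> T \<subseteq> e}" using B assms by auto
    qed
  qed auto
  then have "card {e. e \<subseteq> U \<and> card e = r \<and> T \<subseteq> e} = card {B. B \<subseteq> U - T \<and> card B = r - card T}"
    by (rule bij_betw_same_card)
  also have "\<dots> = card (U - T) choose (r - card T)" using assms by (simp add: n_subsets)
  also have "card (U - T) = card U - card T" using assms fT by (simp add: card_Diff_subset)
  finally show ?thesis .
qed

lemma card_supersets_le:
  assumes "finite U" "T \<subseteq> U"
  shows "card {e. e \<subseteq> U \<and> card e = r \<and> T \<subseteq> e} \<le> (card U - card T) choose (r - card T)"
proof (cases "card T \<le> r")
  case True
  then show ?thesis using card_supersets[OF assms] by simp
next
  case False
  have "{e. e \<subseteq> U \<and> card e = r \<and> T \<subseteq> e} = {}"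
  proof (rule ccontr)
    assume "{e. e \<subseteq> U \<and> card e = r \<and> T \<subseteq> e} \<noteq> {}"
    then obtain e where e: "e \<subseteq> U" "card e = r" "T \<subseteq> e" by auto
    then have "card T \<le> card e" using assms(1) by (meson card_mono finite_subset)
    then show False using False e by simp
  qed
  then show ?thesis by (metis card.empty zero_le)
qed

lemma card_transversals_le:
  assumes U: "finite U" and AU: "\<forall>j<k. A j \<subseteq> U"
    and disj: "\<forall>i<k. \<forall>j<k. i \<noteq> j \<longrightarrow> A i \<inter> A j = {}"
  shows "card {e. e \<subseteq> U \<and> card e = r \<and> (\<forall>j<k. e \<inter> A j \<noteq> {})}
     \<le> (\<Prod>j<k. card (A j)) * ((card U - k) choose (r - k))"
proof -
  let ?P = "PiE {..<k} A"
  let ?S = "\<lambda>f. {e. e \<subseteq> U \<and> card e = r \<and> f ` {..<k} \<subseteq> e}"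
  have finP: "finite ?P" using AU U by (intro finite_PiE) (auto intro: finite_subset)
  have cover: "{e. e \<subseteq> U \<and> card e = r \<and> (\<forall>j<k. e \<inter> A j \<noteq> {})} \<subseteq> (\<Union>f\<in>?P. ?S f)"
  proof
    fix e assume e: "e \<in> {e. e \<subseteq> U \<and> card e = r \<and> (\<forall>j<k. e \<inter> A j \<noteq> {})}"
    define f where "f = (\<lambda>j. if j < k then (SOME y. y \<in> e \<inter> A j) else undefined)"
    have fj: "f j \<in> e \<inter> A j" if "j < k" for j
      using e that someI_ex[of "\<lambda>y. y \<in> e \<inter> A j"] by (auto simp: f_def)
    have "f \<in> ?P" using fj by (auto simp: f_def PiE_def extensional_def)
    moreover have "e \<in> ?S f" using e fj by blast
    ultimately show "e \<in> (\<Union>f\<in>?P. ?S f)" by blast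
  qed
  have each: "card (?S f) \<le> (card U - k) choose (r - k)" if f: "f \<in> ?P" for f
  proof -
    have "inj_on f {..<k}"
      using disj PiE_mem[OF f] by (intro inj_onI) (metis disjoint_iff lessThan_iff)
    then have "card (f ` {..<k}) = k" by (simp add: card_image)
    moreover have "f ` {..<k} \<subseteq> U" using PiE_mem[OF f] AU by blast
    ultimately show ?thesis using card_supersets_le[OF U, of "f ` {..<k}" r] by simp
  qed
  have "card {e. e \<subseteq> U \<and> card e = r \<and> (\<forall>j<k. e \<inter> A j \<noteq> {})} \<le> card (\<Union>f\<in>?P. ?S f)"
    by (rule card_mono[OF _ cover]) (rule finite_subset[of _ "Pow U"], use U in auto)
  also have "\<dots> \<le> (\<Sum>f\<in>?P. card (?S f))" by (rule card_UN_le[OF finP])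
  also have "\<dots> \<le> (\<Sum>f\<in>?P. (card U - k) choose (r - k))" by (rule sum_mono) (rule each)
  also have "\<dots> = (\<Prod>j<k. card (A j)) * ((card U - k) choose (r - k))" by (simp add: card_PiE)
  finally show ?thesis .
qed

lemma pred_mult_choose_pred:
  assumes "2 \<le> r" "2 \<le> n"
  shows "(n - 1) * ((n - 2) choose (r - 2)) = (r - 1) * ((n - 1) choose (r - 1))"
proof -
  have "Suc (n - 2) * ((n - 2) choose (r - 2)) = (Suc (n - 2) choose Suc (r - 2)) * Suc (r - 2)"
    by (rule Suc_times_binomial_eq)
  moreover have "Suc (n - 2) = n - 1" "Suc (r - 2) = r - 1" using assms by auto
  ultimately show ?thesis by simp
qed

lemma choose_le_power_div_fact:
  assumes "m \<le> n"
  shows "real (m choose p) \<le> real n ^ p / fact p"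
proof -
  have "(m choose p) * fact p \<le> m ^ p" by (rule binomial_fact_pow)
  also have "\<dots> \<le> n ^ p" using assms by (rule power_mono) simp
  finally have "real ((m choose p) * fact p) \<le> real (n ^ p)" by (simp only: of_nat_le_iff)
  then have "real (m choose p) * fact p \<le> real n ^ p" by simp
  then show ?thesis by (simp add: field_simps)
qed

lemma diff_div_add_le:
  fixes a N m X :: real
  assumes "N - m \<le> a" "0 < N - m" "0 \<le> X" "0 \<le> m"
  shows "(N - m) / (N + X) \<le> a / (a + X)"
proof -
  have "a * (N + X) - (N - m) * (a + X) = a * m + X * (a - (N - m))" by (simp add: algebra_simps)
  also have "\<dots> \<ge> 0" using assms by (intro add_nonneg_nonneg mult_nonneg_nonneg) auto
  finally show ?thesis using assms by (simp add: divide_simps)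
qed

lemma power_div_fact_le_exp:
  fixes x :: real
  assumes "0 \<le> x"
  shows "x ^ p / fact p \<le> exp x"
proof -
  have sums: "(\<lambda>n. x ^ n / fact n) sums exp x"
    using exp_converges[of x] by (simp add: divide_inverse_commute)
  have "(\<Sum>n\<in>{p}. x ^ n / fact n) \<le> (\<Sum>n. x ^ n / fact n)"
    by (rule sum_le_suminf) (use sums assms in \<open>auto simp: sums_iff\<close>)
  then show ?thesis using sums by (simp add: sums_iff)
qed

lemma power_div_fact_le:
  fixes y :: real
  assumes "0 \<le> y" "1 \<le> p"
  shows "y ^ p / fact p \<le> (exp 1 * y / real p) ^ p"
proof -
  have "y ^ p / fact p = (y / real p) ^ p * (real p ^ p / fact p)"
    using assms by (simp add: power_divide)
  also have "\<dots> \<le> (y / real p) ^ p * exp (real p)"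
    by (intro mult_left_mono power_div_fact_le_exp) (use assms in auto)
  also have "exp (real p) = exp 1 ^ p" using exp_of_nat_mult[of p 1] by simp
  also have "(y / real p) ^ p * exp 1 ^ p = (exp 1 * y / real p) ^ p"
    by (simp add: power_mult_distrib[symmetric] mult.commute)
  finally show ?thesis .
qed

section \<open>The process continued from a given history\<close>

lemma integrable_measure_pmf_prob [simp]:
  "integrable (measure_pmf M) (\<lambda>x. measure_pmf.prob (N x) X)"
  by (rule measure_pmf.integrable_const_bound[where B=1]) auto

lemma measure_bind_pmf:
  "measure_pmf.prob (bind_pmf M N) X = measure_pmf.expectation M (\<lambda>x. measure_pmf.prob (N x) X)"
proof -
  have "ennreal (measure_pmf.prob (bind_pmf M N) X) = emeasure (bind_pmf M N) X"
    by (simp add: measure_pmf.emeasure_eq_measure)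
  also have "\<dots> = (\<integral>\<^sup>+x. ennreal (measure_pmf.prob (N x) X) \<partial>M)"
    by (subst emeasure_bind_pmf) (simp add: measure_pmf.emeasure_eq_measure)
  also have "\<dots> = ennreal (measure_pmf.expectation M (\<lambda>x. measure_pmf.prob (N x) X))"
    by (rule nn_integral_eq_integral) auto
  finally show ?thesis by (simp add: integral_nonneg_AE)
qed

lemma prob_eq_0I: "(\<And>F. F \<in> set_pmf p \<Longrightarrow> F \<notin> A) \<Longrightarrow> measure_pmf.prob p A = 0"
  by (subst measure_pmf_zero_iff) blast

lemma take_Suc_length_eq_snocD:
  assumes "take (Suc (length H)) F = H @ [e]"
  shows "length H < length F" "F ! length H = e" "take (length H) F = H"
proof -
  have "length (take (Suc (length H)) F) = Suc (length H)" using assms by simp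
  then show "length H < length F" by simp
  have "F ! length H = take (Suc (length H)) F ! length H" by simp
  then show "F ! length H = e" using assms by simp
  have "take (length H) F = take (length H) (take (Suc (length H)) F)" by simp
  then show "take (length H) F = H" using assms by simp
qed

definition proc_step :: "nat \<Rightarrow> nat \<Rightarrow> nat set list \<Rightarrow> nat set list pmf" where
  "proc_step n r F = (if adm n r F = {} then return_pmf F
     else map_pmf (\<lambda>e. F @ [e]) (pmf_of_set (adm n r F)))"

text \<open>The process run for k further steps from the history H; unlike \<open>proc\<close>, the recursion
  peels off the first step, which is what conditioning on a prefix needs.\<close>
fun proc_from :: "nat \<Rightarrow> nat \<Rightarrow> nat set list \<Rightarrow> nat \<Rightarrow> nat set list pmf" where
  "proc_from n r H 0 = return_pmf H"
| "proc_from n r H (Suc k) = bind_pmf (proc_step n r H) (\<lambda>H'. proc_from n r H' k)"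

lemma proc_from_Suc_right: "proc_from n r H (Suc k) = bind_pmf (proc_from n r H k) (proc_step n r)"
proof (induction k arbitrary: H)
  case 0
  then show ?case by (simp add: bind_return_pmf bind_return_pmf')
next
  case (Suc k)
  have "proc_from n r H (Suc (Suc k)) =
      bind_pmf (proc_step n r H) (\<lambda>H'. bind_pmf (proc_from n r H' k) (proc_step n r))"
    using Suc by simp
  also have "\<dots> = bind_pmf (proc_from n r H (Suc k)) (proc_step n r)"
    by (simp add: bind_assoc_pmf)
  finally show ?case .
qed

lemma proc_eq_proc_from: "proc n r k = proc_from n r [] k"
proof (induction k)
  case 0
  then show ?case by simp
next
  case (Suc k)
  then show ?case by (simp del: proc_from.simps add: proc_from_Suc_right proc_step_def[abs_def])
qed

lemma proc_from_add:
  "proc_from n r H (a + b) = bind_pmf (proc_from n r H a) (\<lambda>H'. proc_from n r H' b)"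
  by (induction a arbitrary: H) (simp_all add: bind_return_pmf bind_assoc_pmf)

lemma finite_adm: "finite (adm n r F)"
  by (rule finite_subset[of _ "Pow {1..n}"]) (auto simp: adm_def)

lemma set_pmf_proc_step:
  "F' \<in> set_pmf (proc_step n r F) \<Longrightarrow> F' = F \<or> (\<exists>e\<in>adm n r F. F' = F @ [e])"
  by (auto simp: proc_step_def finite_adm split: if_splits)

lemma set_pmf_proc_from:
  assumes "F \<in> set_pmf (proc_from n r H k)"
  shows "take (length H) F = H \<and> length F \<le> length H + k \<and>
     (\<forall>j. length H \<le> j \<and> j < length F \<longrightarrow> F!j \<subseteq> {1..n} \<and> card (F!j) = r)"
  using assms
proof (induction k arbitrary: H)
  case 0
  then show ?case by auto
next
  case (Suc k)
  then obtain H' where H': "H' \<in> set_pmf (proc_step n r H)" "F \<in> set_pmf (proc_from n r H' k)"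
    by auto
  note IH = Suc.IH[OF H'(2)]
  from set_pmf_proc_step[OF H'(1)] show ?case
  proof
    assume "H' = H"
    then show ?thesis using IH by auto
  next
    assume "\<exists>e\<in>adm n r H. H' = H @ [e]"
    then obtain e where e: "e \<in> adm n r H" "H' = H @ [e]" by auto
    then have "take (Suc (length H)) F = H @ [e]" using IH by simp
    note new_edge = take_Suc_length_eq_snocD[OF this]
    have "e \<subseteq> {1..n} \<and> card e = r" using e(1) by (auto simp: adm_def)
    moreover have "F!j \<subseteq> {1..n} \<and> card (F!j) = r" if "Suc (length H) \<le> j" "j < length F" for j
      using IH e(2) that by simp
    ultimately have "\<forall>j. length H \<le> j \<and> j < length F \<longrightarrow> F!j \<subseteq> {1..n} \<and> card (F!j) = r"
      using new_edge(2) by (metis le_neq_implies_less Suc_leI)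
    then show ?thesis using IH e(2) new_edge(3) by simp
  qed
qed

lemma proc_from_nth_length:
  assumes "F \<in> set_pmf (proc_from n r (H @ [e]) k)"
  shows "length H < length F" "F ! length H = e"
  using take_Suc_length_eq_snocD[of H F e] set_pmf_proc_from[OF assms] by simp_all

lemma prob_proc_from_Suc:
  assumes "adm n r H \<noteq> {}"
  shows "measure_pmf.prob (proc_from n r H (Suc k)) A =
    (\<Sum>e\<in>adm n r H. measure_pmf.prob (proc_from n r (H @ [e]) k) A) / card (adm n r H)"
proof -
  have "proc_from n r H (Suc k) = bind_pmf (pmf_of_set (adm n r H)) (\<lambda>e. proc_from n r (H @ [e]) k)"
    using assms by (simp add: proc_step_def map_pmf_def bind_assoc_pmf bind_return_pmf)
  then show ?thesis
    using assms by (simp add: measure_bind_pmf integral_pmf_of_set finite_adm)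
qed

lemma prob_proc_from_snoc_eq_0:
  assumes "\<not> P e"
  shows "measure_pmf.prob (proc_from n r (H @ [e]) k) {F. Q F \<and> (\<forall>j<length F. P (F!j))} = 0"
proof (rule prob_eq_0I)
  fix F assume "F \<in> set_pmf (proc_from n r (H @ [e]) k)"
  from proc_from_nth_length[OF this] show "F \<notin> {F. Q F \<and> (\<forall>j<length F. P (F!j))}"
    using assms by auto
qed

lemma prob_proc_from_Suc_le:
  assumes "adm n r H \<noteq> {}"
    and "\<And>e. e \<in> adm n r H \<Longrightarrow>
      measure_pmf.prob (proc_from n r (H @ [e]) k) A \<le> (if e \<in> G then c else 0)"
  shows "measure_pmf.prob (proc_from n r H (Suc k)) A
    \<le> real (card (adm n r H \<inter> G)) * c / card (adm n r H)"
proof -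
  have "measure_pmf.prob (proc_from n r H (Suc k)) A
      = (\<Sum>e\<in>adm n r H. measure_pmf.prob (proc_from n r (H @ [e]) k) A) / card (adm n r H)"
    by (rule prob_proc_from_Suc[OF assms(1)])
  also have "\<dots> \<le> (\<Sum>e\<in>adm n r H. if e \<in> G then c else 0) / card (adm n r H)"
    by (intro divide_right_mono sum_mono assms(2)) auto
  also have "(\<Sum>e\<in>adm n r H. if e \<in> G then c else 0) = real (card (adm n r H \<inter> G)) * c"
    by (simp add: sum.If_cases finite_adm)
  finally show ?thesis .
qed

lemma prob_proc_from_Suc_ge:
  assumes "adm n r H \<noteq> {}"
    and "\<And>e. e \<in> adm n r H \<Longrightarrow>
      (if e \<in> G then c else 0) \<le> measure_pmf.prob (proc_from n r (H @ [e]) k) A"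
  shows "real (card (adm n r H \<inter> G)) * c / card (adm n r H)
    \<le> measure_pmf.prob (proc_from n r H (Suc k)) A"
proof -
  have "real (card (adm n r H \<inter> G)) * c = (\<Sum>e\<in>adm n r H. if e \<in> G then c else 0)"
    by (simp add: sum.If_cases finite_adm)
  also have "\<dots> / card (adm n r H)
      \<le> (\<Sum>e\<in>adm n r H. measure_pmf.prob (proc_from n r (H @ [e]) k) A) / card (adm n r H)"
    by (intro divide_right_mono sum_mono assms(2)) auto
  also have "\<dots> = measure_pmf.prob (proc_from n r H (Suc k)) A"
    by (rule prob_proc_from_Suc[OF assms(1), symmetric])
  finally show ?thesis .
qed

section \<open>Edges through a point\<close>

definition edges_thru :: "nat \<Rightarrow> nat \<Rightarrow> nat \<Rightarrow> nat set set" where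
  "edges_thru n r x = {e. e \<subseteq> {1..n} \<and> card e = r \<and> x \<in> e}"

definition edges_thru_meeting :: "nat \<Rightarrow> nat \<Rightarrow> nat \<Rightarrow> nat set \<Rightarrow> nat set set" where
  "edges_thru_meeting n r x s = {e \<in> edges_thru n r x. e \<inter> s \<noteq> {}}"

definition edges_avoiding :: "nat \<Rightarrow> nat \<Rightarrow> nat \<Rightarrow> nat set list \<Rightarrow> nat set set" where
  "edges_avoiding n r x H = {e. e \<subseteq> {1..n} \<and> card e = r \<and> x \<notin> e \<and> (\<forall>j<3. e \<inter> H!j \<noteq> {})}"

lemma finite_edges_thru: "finite (edges_thru n r x)"
  by (rule finite_subset[of _ "Pow {1..n}"]) (auto simp: edges_thru_def)

lemma finite_edges_thru_meeting: "finite (edges_thru_meeting n r x s)"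
  using finite_edges_thru by (simp add: edges_thru_meeting_def)

lemma finite_edges_avoiding: "finite (edges_avoiding n r x H)"
  by (rule finite_subset[of _ "Pow {1..n}"]) (auto simp: edges_avoiding_def)

lemma card_edges_thru:
  assumes "x \<in> {1..n}" "1 \<le> r"
  shows "card (edges_thru n r x) = (n - 1) choose (r - 1)"
proof -
  have "edges_thru n r x = {e. e \<subseteq> {1..n} \<and> card e = r \<and> {x} \<subseteq> e}"
    by (auto simp: edges_thru_def)
  then show ?thesis using card_supersets[of "{1..n}" "{x}" r] assms by simp
qed

lemma card_edges_thru_meeting_le:
  assumes "x \<in> {1..n}" "s \<subseteq> {1..n} - {x}" "card s = r"
  shows "card (edges_thru_meeting n r x s) \<le> r * ((n - 2) choose (r - 2))"
proof -
  let ?T = "\<lambda>y. {e. e \<subseteq> {1..n} \<and> card e = r \<and> {x, y} \<subseteq> e}"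
  have fs: "finite s" using assms(2) finite_subset by blast
  have "edges_thru_meeting n r x s \<subseteq> (\<Union>y\<in>s. ?T y)"
    by (auto simp: edges_thru_meeting_def edges_thru_def)
  then have "card (edges_thru_meeting n r x s) \<le> card (\<Union>y\<in>s. ?T y)"
    by (intro card_mono) (auto intro!: finite_subset[of _ "Pow {1..n}"])
  also have "\<dots> \<le> (\<Sum>y\<in>s. card (?T y))" by (rule card_UN_le[OF fs])
  also have "\<dots> \<le> (\<Sum>y\<in>s. (n - 2) choose (r - 2))"
  proof (rule sum_mono)
    fix y assume "y \<in> s"
    then have "y \<noteq> x" "{x, y} \<subseteq> {1..n}" using assms by auto
    then have "card {x, y} = 2" "{x, y} \<subseteq> {1..n}" by auto
    then show "card (?T y) \<le> (n - 2) choose (r - 2)"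
      using card_supersets_le[of "{1..n}" "{x, y}" r] by simp
  qed
  also have "\<dots> = r * ((n - 2) choose (r - 2))" using assms by simp
  finally show ?thesis .
qed

lemma card_star_transversals_le:
  assumes x: "x \<in> {1..n}"
    and edges: "\<forall>j<k. x \<in> E j \<and> E j \<subseteq> {1..n} \<and> card (E j) = r"
    and star: "\<forall>i<k. \<forall>j<k. i \<noteq> j \<longrightarrow> E i \<inter> E j = {x}"
  shows "card {e. e \<subseteq> {1..n} - {x} \<and> card e = r \<and> (\<forall>j<k. e \<inter> (E j - {x}) \<noteq> {})}
     \<le> (r - 1) ^ k * ((n - 1 - k) choose (r - k))"
proof -
  have "card {e. e \<subseteq> {1..n} - {x} \<and> card e = r \<and> (\<forall>j<k. e \<inter> (E j - {x}) \<noteq> {})}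
     \<le> (\<Prod>j<k. card (E j - {x})) * ((card ({1..n} - {x}) - k) choose (r - k))"
    using edges star by (intro card_transversals_le) blast+
  also have "(\<Prod>j<k. card (E j - {x})) = (r - 1) ^ k"
    using edges by (simp add: card_Diff_singleton)
  also have "card ({1..n} - {x}) = n - 1" using x by simp
  finally show ?thesis .
qed

lemma card_adm_thru_ge:
  assumes "\<forall>j<length H. x \<in> H!j"
  shows "real (card (edges_thru n r x)) - real (length H) \<le> real (card (adm n r H \<inter> edges_thru n r x))"
proof -
  have "edges_thru n r x - set H \<subseteq> adm n r H \<inter> edges_thru n r x"
    using assms unfolding edges_thru_def adm_def by (auto simp: in_set_conv_nth) (metis IntI empty_iff)
  then have "card (edges_thru n r x) - card (set H) \<le> card (adm n r H \<inter> edges_thru n r x)"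
    using diff_card_le_card_Diff[of "set H" "edges_thru n r x"] finite_adm
    by (meson card_mono finite_Int finite_set le_trans)
  then show ?thesis using card_length[of H] by linarith
qed

lemma card_adm_le_thru_plus_avoiding:
  assumes "3 \<le> length H"
  shows "card (adm n r H) \<le> card (adm n r H \<inter> edges_thru n r x) + card (edges_avoiding n r x H)"
proof -
  have "adm n r H - edges_thru n r x \<subseteq> edges_avoiding n r x H"
    using assms by (fastforce simp: adm_def edges_thru_def edges_avoiding_def)
  then have "card (adm n r H - edges_thru n r x) \<le> card (edges_avoiding n r x H)"
    by (rule card_mono[OF finite_edges_avoiding])
  moreover have "card (adm n r H) = card (adm n r H \<inter> edges_thru n r x) + card (adm n r H - edges_thru n r x)"
    using finite_adm by (metis card_Int_Diff)
  ultimately show ?thesis by simp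
qed

text \<open>The parameter m bounds the final length of the history, hence the number of edges
  through x that are no longer available.\<close>
lemma prob_thru_meeting_le:
  assumes thru: "\<forall>j<length H. x \<in> H!j" and len: "length H + k \<le> m"
    and big: "real m < real (card (edges_thru n r x))"
  shows "measure_pmf.prob (proc_from n r H k)
      {F. length F = length H + k \<and> (\<forall>j<length F. x \<in> F!j \<and> F!j \<inter> s \<noteq> {})}
    \<le> (real (card (edges_thru_meeting n r x s)) / (real (card (edges_thru n r x)) - real m)) ^ k"
  using assms
proof (induction k arbitrary: H)
  case 0
  then show ?case by simp
next
  case (Suc k)
  define N where "N = real (card (edges_thru n r x)) - real m"
  define q where "q = real (card (edges_thru_meeting n r x s)) / N"
  let ?A = "{F. length F = length H + Suc k \<and> (\<forall>j<length F. x \<in> F!j \<and> F!j \<inter> s \<noteq> {})}"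
  have N_pos: "N > 0" using Suc.prems(3) by (simp add: N_def)
  have "N \<le> real (card (adm n r H \<inter> edges_thru n r x))"
    using card_adm_thru_ge[OF Suc.prems(1), of n r] Suc.prems(2) by (simp add: N_def)
  also have "\<dots> \<le> real (card (adm n r H))" by (simp add: card_mono finite_adm)
  finally have card_adm: "N \<le> real (card (adm n r H))" .
  then have adm_ne: "adm n r H \<noteq> {}" using N_pos by auto
  have "measure_pmf.prob (proc_from n r H (Suc k)) ?A
      \<le> real (card (adm n r H \<inter> edges_thru_meeting n r x s)) * q ^ k / card (adm n r H)"
  proof (rule prob_proc_from_Suc_le[OF adm_ne])
    fix e assume e: "e \<in> adm n r H"
    show "measure_pmf.prob (proc_from n r (H @ [e]) k) ?A
      \<le> (if e \<in> edges_thru_meeting n r x s then q ^ k else 0)"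
    proof (cases "e \<in> edges_thru_meeting n r x s")
      case True
      then have "\<forall>j<length (H @ [e]). x \<in> (H @ [e])!j"
        using Suc.prems(1) by (auto simp: edges_thru_meeting_def edges_thru_def nth_append)
      then show ?thesis
        using Suc.IH[of "H @ [e]"] Suc.prems(2,3) True by (simp add: q_def N_def)
    next
      case False
      with e have "\<not> (x \<in> e \<and> e \<inter> s \<noteq> {})"
        by (auto simp: edges_thru_meeting_def edges_thru_def adm_def)
      then show ?thesis
        using False prob_proc_from_snoc_eq_0[of "\<lambda>e. x \<in> e \<and> e \<inter> s \<noteq> {}" e n r H k] by simp
    qed
  qed
  also have "\<dots> \<le> real (card (edges_thru_meeting n r x s)) * q ^ k / N"
    using N_pos card_adm
    by (intro frac_le mult_right_mono)
      (auto simp: q_def intro: card_mono[OF finite_edges_thru_meeting])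
  also have "\<dots> = q ^ Suc k" by (simp add: q_def)
  finally show ?case by (simp add: q_def N_def)
qed

text \<open>Admissible edges missing x must meet the first three edges, so at most Y of them
  compete with the edges through x.\<close>
lemma prob_thru_ge:
  assumes thru: "\<forall>j<length H. x \<in> H!j" and len: "length H + k \<le> m"
    and big: "real m < real (card (edges_thru n r x))"
    and avoiding: "card (edges_avoiding n r x H) \<le> Y" and three: "3 \<le> length H"
  shows "((real (card (edges_thru n r x)) - real m) / (real (card (edges_thru n r x)) + real Y)) ^ k
    \<le> measure_pmf.prob (proc_from n r H k) {F. length F = length H + k \<and> (\<forall>j<length F. x \<in> F!j)}"
  using assms
proof (induction k arbitrary: H)
  case 0
  then show ?case by simp
next
  case (Suc k)
  define N where "N = real (card (edges_thru n r x))"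
  define v where "v = (N - real m) / (N + real Y)"
  define a where "a = card (adm n r H \<inter> edges_thru n r x)"
  let ?A = "{F. length F = length H + Suc k \<and> (\<forall>j<length F. x \<in> F!j)}"
  have Nm: "N - real m > 0" using Suc.prems(3) by (simp add: N_def)
  have v_nonneg: "v \<ge> 0" using Nm by (simp add: v_def)
  have a_ge: "N - real m \<le> real a"
    using card_adm_thru_ge[OF Suc.prems(1), of n r] Suc.prems(2) by (simp add: N_def a_def)
  have card_adm: "real (card (adm n r H)) \<le> real a + real Y"
    using card_adm_le_thru_plus_avoiding[OF Suc.prems(5), of n r x] Suc.prems(4) by (simp add: a_def)
  have adm_ne: "adm n r H \<noteq> {}" using a_ge Nm by (auto simp: a_def)
  then have adm_pos: "real (card (adm n r H)) > 0" using finite_adm by (simp add: card_gt_0_iff)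
  have "v ^ Suc k = v * v ^ k" by simp
  also have "\<dots> \<le> real a / (real a + real Y) * v ^ k"
    unfolding v_def by (intro mult_right_mono diff_div_add_le) (use a_ge Nm in auto)
  also have "\<dots> \<le> real a * v ^ k / card (adm n r H)"
    using adm_pos card_adm v_nonneg by (simp add: divide_simps mult_left_mono mult_right_mono)
  also have "\<dots> \<le> measure_pmf.prob (proc_from n r H (Suc k)) ?A"
    unfolding a_def
  proof (rule prob_proc_from_Suc_ge[OF adm_ne])
    fix e assume e: "e \<in> adm n r H"
    show "(if e \<in> edges_thru n r x then v ^ k else 0) \<le> measure_pmf.prob (proc_from n r (H @ [e]) k) ?A"
    proof (cases "e \<in> edges_thru n r x")
      case True
      then have "\<forall>j<length (H @ [e]). x \<in> (H @ [e])!j"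
        using Suc.prems(1) by (auto simp: edges_thru_def nth_append)
      moreover have "edges_avoiding n r x (H @ [e]) = edges_avoiding n r x H"
        using Suc.prems(5) by (auto simp: edges_avoiding_def nth_append)
      ultimately show ?thesis
        using Suc.IH[of "H @ [e]"] Suc.prems(2-5) True by (simp add: v_def N_def)
    qed simp
  qed
  finally show ?case by (simp add: v_def N_def)
qed

section \<open>Conditioning on a four-star\<close>

text \<open>Of the C(n-1, r-1) edges through the kernel at most 3r are used up. \<open>meet_bound\<close> bounds
  the chance that the next edge passes through the kernel and meets a fixed witness s of D,
  \<open>thru_bound\<close> bounds from below the chance that it passes through the kernel, and
  \<open>cond_bound\<close> is the resulting bound on P(D | B_3r \<inter> A_4).\<close>
definition meet_bound :: "nat \<Rightarrow> nat \<Rightarrow> real" where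
  "meet_bound n r = real (r * ((n - 2) choose (r - 2))) / (real ((n - 1) choose (r - 1)) - real (3 * r))"

definition thru_bound :: "nat \<Rightarrow> nat \<Rightarrow> real" where
  "thru_bound n r = (real ((n - 1) choose (r - 1)) - real (3 * r)) /
     (real ((n - 1) choose (r - 1)) + real ((r - 1) ^ 3 * ((n - 4) choose (r - 3))))"

definition cond_bound :: "nat \<Rightarrow> nat \<Rightarrow> real" where
  "cond_bound n r = real ((r - 1) ^ 4 * ((n - 5) choose (r - 4))) * (meet_bound n r / thru_bound n r) ^ (3 * r - 4)"

lemma cond_bound_nonneg:
  assumes "real (3 * r) < real ((n - 1) choose (r - 1))"
  shows "0 \<le> cond_bound n r"
  using assms by (simp add: cond_bound_def meet_bound_def thru_bound_def)

locale four_star =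
  fixes n r x :: nat and H :: "nat set list"
  assumes two_le_r: "2 \<le> r"
    and length_H: "length H = 4"
    and petals: "\<And>i j. i < 4 \<Longrightarrow> j < 4 \<Longrightarrow> i \<noteq> j \<Longrightarrow> H!i \<inter> H!j = {x}"
    and edges: "\<And>j. j < 4 \<Longrightarrow> H!j \<subseteq> {1..n} \<and> card (H!j) = r"
    and many_thru: "real (3 * r) < real ((n - 1) choose (r - 1))"
begin

lemma kernel_in_edge:
  assumes "j < 4"
  shows "x \<in> H!j"
proof -
  define i :: nat where "i = (if j = 0 then 1 else 0)"
  then have "i < 4" "i \<noteq> j" by auto
  then show ?thesis using petals[of i j] assms by blast
qed

lemma kernel_in_range: "x \<in> {1..n}"
  using kernel_in_edge[of 0] edges[of 0] by auto

lemma card_edges_thru_kernel: "card (edges_thru n r x) = (n - 1) choose (r - 1)"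
  using card_edges_thru[OF kernel_in_range] two_le_r by simp

lemma set_pmf_proc_from_star:
  assumes "F \<in> set_pmf (proc_from n r H k)"
  shows "length F \<le> 4 + k" "\<And>j. j < 4 \<Longrightarrow> F!j = H!j" "is_star 4 F"
proof -
  have prefix: "take 4 F = H" "length F \<le> 4 + k"
    using set_pmf_proc_from[OF assms] length_H by auto
  then show "length F \<le> 4 + k" by simp
  show F_eq: "F!j = H!j" if "j < 4" for j
    using prefix(1) that by (metis nth_take)
  show "is_star 4 F" using petals by (auto simp: is_star_def F_eq)
qed

lemma card_edges_avoiding_le: "card (edges_avoiding n r x H) \<le> (r - 1) ^ 3 * ((n - 4) choose (r - 3))"
proof -
  have "card (edges_avoiding n r x H)
      \<le> card {e. e \<subseteq> {1..n} - {x} \<and> card e = r \<and> (\<forall>j<3. e \<inter> (H!j - {x}) \<noteq> {})}"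
    by (intro card_mono) (auto simp: edges_avoiding_def intro!: finite_subset[of _ "Pow {1..n}"])
  also have "\<dots> \<le> (r - 1) ^ 3 * ((n - 4) choose (r - 3))"
    using card_star_transversals_le[OF kernel_in_range, of 3 "(!) H" r] petals edges kernel_in_edge
    by (simp add: numeral_eq_Suc)
  finally show ?thesis .
qed

lemma prob_all_thru_ge:
  "thru_bound n r ^ (3 * r - 4) \<le>
    measure_pmf.prob (proc_from n r H (3 * r - 4)) {F. evB (3 * r) F \<and> evA 4 F}"
proof -
  let ?P = "proc_from n r H (3 * r - 4)"
  let ?Thru = "{F. length F = length H + (3 * r - 4) \<and> (\<forall>j<length F. x \<in> F!j)}"
  have "thru_bound n r ^ (3 * r - 4) \<le> measure_pmf.prob ?P ?Thru"
    unfolding thru_bound_def card_edges_thru_kernel[symmetric]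
  proof (rule prob_thru_ge[OF _ _ _ card_edges_avoiding_le])
    show "\<forall>j<length H. x \<in> H!j" using kernel_in_edge length_H by simp
  qed (use length_H two_le_r many_thru card_edges_thru_kernel in simp_all)
  also have "\<dots> = measure_pmf.prob ?P (?Thru \<inter> set_pmf ?P)" by (simp add: measure_Int_set_pmf)
  also have "\<dots> \<le> measure_pmf.prob ?P {F. evB (3 * r) F \<and> evA 4 F}"
  proof (rule measure_pmf.finite_measure_mono)
    show "?Thru \<inter> set_pmf ?P \<subseteq> {F. evB (3 * r) F \<and> evA 4 F}"
    proof
      fix F assume F: "F \<in> ?Thru \<inter> set_pmf ?P"
      then have "length F = 3 * r" "x \<in> \<Inter> (set (take (3 * r) F))"
        using length_H two_le_r by (auto simp: in_set_conv_nth)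
      then show "F \<in> {F. evB (3 * r) F \<and> evA 4 F}"
        using set_pmf_proc_from_star(3)[of F] F two_le_r by (auto simp: evB_def evA_def)
    qed
  qed simp
  finally show ?thesis .
qed

lemma D_implies_thru_meeting:
  assumes F: "F \<in> set_pmf (proc_from n r H (3 * r - 4))" and D: "evD n r F" and B: "evB (3 * r) F"
  obtains s where "s \<subseteq> {1..n} - {x}" "card s = r" "\<forall>j<4. s \<inter> (H!j - {x}) \<noteq> {}"
    "length F = 3 * r" "\<forall>j<length F. x \<in> F!j \<and> F!j \<inter> s \<noteq> {}"
proof -
  have len: "length F = 3 * r"
    using B set_pmf_proc_from_star(1)[OF F] two_le_r by (simp add: evB_def)
  then have take_F: "take (3 * r) F = F" by simp
  have "\<Inter> (set F) \<noteq> {}" using B take_F by (simp add: evB_def)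
  then obtain y where y: "y \<in> \<Inter> (set F)" by blast
  have "y \<in> F!0" "y \<in> F!1" using y nth_mem[of 0 F] nth_mem[of 1 F] len two_le_r by auto
  then have "y \<in> H!0 \<inter> H!1" using set_pmf_proc_from_star(2)[OF F] by simp
  then have "y = x" using petals[of 0 1] by auto
  then have thru: "\<forall>j<length F. x \<in> F!j" using y by auto
  from D obtain s where s: "s \<subseteq> {1..n}" "card s = r" "\<forall>j<3 * r. s \<inter> F!j \<noteq> {}"
      "s \<inter> \<Inter> (set F) = {}"
    unfolding evD_def take_F by blast
  have "x \<notin> s" using s(4) y \<open>y = x\<close> by blast
  have petal: "s \<inter> (H!j - {x}) \<noteq> {}" if "j < 4" for j
  proof -
    have "s \<inter> F!j \<noteq> {}" using s(3) that two_le_r by simp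
    then show ?thesis using set_pmf_proc_from_star(2)[OF F that] \<open>x \<notin> s\<close> by auto
  qed
  show thesis
  proof (rule that)
    show "s \<subseteq> {1..n} - {x}" using s(1) \<open>x \<notin> s\<close> by blast
    show "\<forall>j<length F. x \<in> F!j \<and> F!j \<inter> s \<noteq> {}"
      using thru s(3) len by (simp add: inf_commute)
  qed (use s(2) petal len in simp_all)
qed

lemma prob_thru_meeting_le_meet_bound:
  assumes "s \<subseteq> {1..n} - {x}" "card s = r"
  shows "measure_pmf.prob (proc_from n r H (3 * r - 4))
      {F. length F = 3 * r \<and> (\<forall>j<length F. x \<in> F!j \<and> F!j \<inter> s \<noteq> {})}
    \<le> meet_bound n r ^ (3 * r - 4)"
proof -
  let ?q = "real (card (edges_thru_meeting n r x s)) / (real (card (edges_thru n r x)) - real (3 * r))"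
  have "card (edges_thru_meeting n r x s) \<le> r * ((n - 2) choose (r - 2))"
    using assms by (rule card_edges_thru_meeting_le[OF kernel_in_range])
  then have "real (card (edges_thru_meeting n r x s)) \<le> real (r * ((n - 2) choose (r - 2)))"
    by (simp only: of_nat_le_iff)
  then have q_le: "?q \<le> meet_bound n r"
    unfolding meet_bound_def card_edges_thru_kernel using many_thru by (simp add: divide_right_mono)
  have "measure_pmf.prob (proc_from n r H (3 * r - 4))
      {F. length F = length H + (3 * r - 4) \<and> (\<forall>j<length F. x \<in> F!j \<and> F!j \<inter> s \<noteq> {})}
    \<le> ?q ^ (3 * r - 4)"
  proof (rule prob_thru_meeting_le)
    show "\<forall>j<length H. x \<in> H!j" using kernel_in_edge length_H by simp
  qed (use length_H two_le_r many_thru card_edges_thru_kernel in simp_all)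
  also have "\<dots> \<le> meet_bound n r ^ (3 * r - 4)"
    using q_le many_thru by (intro power_mono) (simp_all add: card_edges_thru_kernel)
  finally show ?thesis using length_H two_le_r by simp
qed

lemma prob_D_le:
  "measure_pmf.prob (proc_from n r H (3 * r - 4)) {F. evD n r F \<and> evB (3 * r) F \<and> evA 4 F}
    \<le> real ((r - 1) ^ 4 * ((n - 5) choose (r - 4))) * meet_bound n r ^ (3 * r - 4)"
proof -
  let ?P = "proc_from n r H (3 * r - 4)"
  let ?K = "3 * r - 4"
  define S where "S = {s. s \<subseteq> {1..n} - {x} \<and> card s = r \<and> (\<forall>j<4. s \<inter> (H!j - {x}) \<noteq> {})}"
  define A where "A s = {F. length F = 3 * r \<and> (\<forall>j<length F. x \<in> F!j \<and> F!j \<inter> s \<noteq> {})}" for s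
  have finite_S: "finite S" by (rule finite_subset[of _ "Pow {1..n}"]) (auto simp: S_def)
  have card_S: "card S \<le> (r - 1) ^ 4 * ((n - 5) choose (r - 4))"
    using card_star_transversals_le[OF kernel_in_range, of 4 "(!) H" r] petals edges kernel_in_edge
    by (simp add: S_def numeral_eq_Suc)
  have meet_nonneg: "0 \<le> meet_bound n r" using many_thru by (simp add: meet_bound_def)
  have prob_A: "measure_pmf.prob ?P (A s) \<le> meet_bound n r ^ ?K" if "s \<in> S" for s
    using that unfolding S_def A_def by (intro prob_thru_meeting_le_meet_bound) simp_all
  have "measure_pmf.prob ?P {F. evD n r F \<and> evB (3 * r) F \<and> evA 4 F}
      = measure_pmf.prob ?P ({F. evD n r F \<and> evB (3 * r) F \<and> evA 4 F} \<inter> set_pmf ?P)"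
    by (simp add: measure_Int_set_pmf)
  also have "\<dots> \<le> measure_pmf.prob ?P (\<Union>s\<in>S. A s)"
  proof (rule measure_pmf.finite_measure_mono)
    show "{F. evD n r F \<and> evB (3 * r) F \<and> evA 4 F} \<inter> set_pmf ?P \<subseteq> (\<Union>s\<in>S. A s)"
    proof
      fix F assume "F \<in> {F. evD n r F \<and> evB (3 * r) F \<and> evA 4 F} \<inter> set_pmf ?P"
      then have "F \<in> set_pmf ?P" "evD n r F" "evB (3 * r) F" by auto
      then obtain s where "s \<subseteq> {1..n} - {x}" "card s = r" "\<forall>j<4. s \<inter> (H!j - {x}) \<noteq> {}"
          "length F = 3 * r" "\<forall>j<length F. x \<in> F!j \<and> F!j \<inter> s \<noteq> {}"
        by (rule D_implies_thru_meeting)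
      then have "s \<in> S" "F \<in> A s" by (simp_all add: S_def A_def)
      then show "F \<in> (\<Union>s\<in>S. A s)" by blast
    qed
  qed simp
  also have "\<dots> \<le> (\<Sum>s\<in>S. measure_pmf.prob ?P (A s))"
    by (rule measure_pmf.finite_measure_subadditive_finite[OF finite_S]) auto
  also have "\<dots> \<le> real (card S) * meet_bound n r ^ ?K"
    using sum_mono[of S "\<lambda>s. measure_pmf.prob ?P (A s)" "\<lambda>_. meet_bound n r ^ ?K"] prob_A by simp
  also have "\<dots> \<le> real ((r - 1) ^ 4 * ((n - 5) choose (r - 4))) * meet_bound n r ^ ?K"
    using card_S meet_nonneg by (intro mult_right_mono) (simp_all only: of_nat_le_iff zero_le_power)
  finally show ?thesis .
qed

lemma prob_D_le_cond_bound:
  "measure_pmf.prob (proc_from n r H (3 * r - 4)) {F. evD n r F \<and> evB (3 * r) F \<and> evA 4 F}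
    \<le> cond_bound n r * measure_pmf.prob (proc_from n r H (3 * r - 4)) {F. evB (3 * r) F \<and> evA 4 F}"
proof -
  have thru_pos: "0 < thru_bound n r"
    unfolding thru_bound_def using many_thru by (intro divide_pos_pos add_pos_nonneg) (linarith, linarith, simp)
  have "real ((r - 1) ^ 4 * ((n - 5) choose (r - 4))) * meet_bound n r ^ (3 * r - 4)
      = cond_bound n r * thru_bound n r ^ (3 * r - 4)"
    using thru_pos by (simp add: cond_bound_def power_divide)
  also have "\<dots> \<le> cond_bound n r * measure_pmf.prob (proc_from n r H (3 * r - 4)) {F. evB (3 * r) F \<and> evA 4 F}"
    using prob_all_thru_ge cond_bound_nonneg[OF many_thru] by (rule mult_left_mono)
  finally show ?thesis using prob_D_le by (rule order_trans[rotated])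
qed

end

lemma is_star_take [simp]: "is_star i (take i F) \<longleftrightarrow> is_star i F"
  by (simp add: is_star_def)

lemma prob_D_le_cond_bound_given_prefix:
  assumes two_le_r: "2 \<le> r" and many_thru: "real (3 * r) < real ((n - 1) choose (r - 1))"
    and H: "H \<in> set_pmf (proc_from n r [] 4)"
  shows "measure_pmf.prob (proc_from n r H (3 * r - 4)) {F. evD n r F \<and> evB (3 * r) F \<and> evA 4 F}
    \<le> cond_bound n r * measure_pmf.prob (proc_from n r H (3 * r - 4)) {F. evB (3 * r) F \<and> evA 4 F}"
proof (cases "length H = 4 \<and> is_star 4 H")
  case True
  then obtain x where "\<forall>j<4. \<forall>k<4. j \<noteq> k \<longrightarrow> H!j \<inter> H!k = {x}" by (auto simp: is_star_def)
  then have "four_star n r x H"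
    using two_le_r many_thru True set_pmf_proc_from[OF H] by unfold_locales auto
  then show ?thesis by (rule four_star.prob_D_le_cond_bound)
next
  case False
  have "measure_pmf.prob (proc_from n r H (3 * r - 4)) {F. evD n r F \<and> evB (3 * r) F \<and> evA 4 F} = 0"
  proof (rule prob_eq_0I)
    fix F assume F: "F \<in> set_pmf (proc_from n r H (3 * r - 4))"
    have prefix: "take (length H) F = H" "length F \<le> length H + (3 * r - 4)"
      using set_pmf_proc_from[OF F] by auto
    have "length H \<le> 4" using set_pmf_proc_from[OF H] by simp
    show "F \<notin> {F. evD n r F \<and> evB (3 * r) F \<and> evA 4 F}"
    proof
      assume "F \<in> {F. evD n r F \<and> evB (3 * r) F \<and> evA 4 F}"
      then have "3 * r \<le> length F" "is_star 4 F" by (auto simp: evB_def evA_def)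
      moreover from this have "length H = 4" using prefix \<open>length H \<le> 4\<close> two_le_r by linarith
      ultimately show False using False prefix(1) is_star_take[of 4 F] by simp
    qed
  qed
  then show ?thesis using cond_bound_nonneg[OF many_thru] by simp
qed

lemma prob_D_le_cond_bound_mult:
  assumes two_le_r: "2 \<le> r" and many_thru: "real (3 * r) < real ((n - 1) choose (r - 1))"
  shows "measure_pmf.prob (proc n r (3 * r)) {F. evD n r F \<and> evB (3 * r) F \<and> evA 4 F}
    \<le> cond_bound n r * measure_pmf.prob (proc n r (3 * r)) {F. evB (3 * r) F \<and> evA 4 F}"
proof -
  let ?DE = "{F. evD n r F \<and> evB (3 * r) F \<and> evA 4 F}" and ?E = "{F. evB (3 * r) F \<and> evA 4 F}"
  have "proc n r (3 * r) = proc_from n r [] (4 + (3 * r - 4))"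
    using two_le_r by (simp add: proc_eq_proc_from)
  then have split: "proc n r (3 * r) = bind_pmf (proc_from n r [] 4) (\<lambda>H. proc_from n r H (3 * r - 4))"
    by (simp only: proc_from_add)
  have "measure_pmf.prob (proc n r (3 * r)) ?DE
      = measure_pmf.expectation (proc_from n r [] 4) (\<lambda>H. measure_pmf.prob (proc_from n r H (3 * r - 4)) ?DE)"
    unfolding split by (rule measure_bind_pmf)
  also have "\<dots> \<le> measure_pmf.expectation (proc_from n r [] 4)
      (\<lambda>H. cond_bound n r * measure_pmf.prob (proc_from n r H (3 * r - 4)) ?E)"
    using prob_D_le_cond_bound_given_prefix[OF two_le_r many_thru]
    by (intro integral_mono_AE AE_pmfI) auto
  also have "\<dots> = cond_bound n r * measure_pmf.prob (proc n r (3 * r)) ?E"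
    unfolding split measure_bind_pmf by (rule integral_mult_right_zero)
  finally show ?thesis .
qed

lemma cond_prob_D_le_cond_bound:
  assumes "2 \<le> r" and many_thru: "real (3 * r) < real ((n - 1) choose (r - 1))"
  shows "measure_pmf.prob (proc n r (3 * r)) {F. evD n r F \<and> evB (3 * r) F \<and> evA 4 F}
       / measure_pmf.prob (proc n r (3 * r)) {F. evB (3 * r) F \<and> evA 4 F} \<le> cond_bound n r"
proof (cases "measure_pmf.prob (proc n r (3 * r)) {F. evB (3 * r) F \<and> evA 4 F} = 0")
  case True
  then show ?thesis using cond_bound_nonneg[OF many_thru] by simp
next
  case False
  then have "measure_pmf.prob (proc n r (3 * r)) {F. evB (3 * r) F \<and> evA 4 F} > 0"
    by (simp add: zero_less_measure_iff)
  then show ?thesis using prob_D_le_cond_bound_mult[OF assms] by (simp add: divide_le_eq)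
qed

section \<open>Asymptotics of the bound\<close>

lemma six_mul_le_choose:
  assumes r2: "2 \<le> r" and n16: "16 * r^2 \<le> n"
  shows "6 * r \<le> (n - 1) choose (r - 1)"
proof -
  have "r \<le> 16 * r^2" using le_square[of r] by (simp add: power2_eq_square)
  then have rn: "r \<le> n" using n16 by linarith
  have "1 \<le> (n - 2) choose (r - 2)" using rn r2 by (simp add: Suc_le_eq)
  then have "n - 1 \<le> (n - 1) * ((n - 2) choose (r - 2))" by simp
  also have "\<dots> = ((n - 1) choose (r - 1)) * (r - 1)"
    using pred_mult_choose_pred[OF r2] rn r2 by simp
  finally have a: "n - 1 \<le> ((n - 1) choose (r - 1)) * (r - 1)" .
  have "6 * r * r + 1 \<le> 16 * r^2" using r2 by (simp add: power2_eq_square)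
  then have "6 * r * (r - 1) \<le> n - 1" using n16 by (simp add: algebra_simps)
  then have "6 * r * (r - 1) \<le> ((n - 1) choose (r - 1)) * (r - 1)" using a by linarith
  then show ?thesis using r2 by simp
qed

lemma avoiding_count_le_choose:
  assumes r2: "2 \<le> r" and n4: "4 \<le> n" and big: "4 * r ^ 5 \<le> n ^ 2"
  shows "(r - 1) ^ 3 * ((n - 4) choose (r - 3)) \<le> (n - 1) choose (r - 1)"
proof (cases "r = 2")
  case True
  then show ?thesis using n4 by simp
next
  case False
  then have r3: "3 \<le> r" using r2 by simp
  have absorb: "((n - 1) choose (r - 1)) * ((r - 1) * (r - 2)) = (n - 1) * (n - 2) * ((n - 3) choose (r - 3))"
  proof -
    have "((n - 1) choose (r - 1)) * ((r - 1) * (r - 2)) = (n - 1) * (((n - 2) choose (r - 2)) * (r - 2))"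
      using pred_mult_choose_pred[OF r2, of n] n4 by (simp add: mult.assoc mult.commute)
    also have "((n - 2) choose (r - 2)) * (r - 2) = (n - 2) * ((n - 3) choose (r - 3))"
      using pred_mult_choose_pred[of "r - 1" "n - 1"] r3 n4 by (simp add: numeral_eq_Suc mult.commute)
    finally show ?thesis by (simp add: mult.assoc)
  qed
  have powers: "(r - 1) ^ 4 * (r - 2) \<le> (n - 1) * (n - 2)"
  proof -
    have "(r - 1) ^ 4 * (r - 2) \<le> r ^ 4 * r" by (intro mult_le_mono power_mono) auto
    also have "\<dots> = r ^ 5" by (simp add: power_Suc2[symmetric] del: power_Suc)
    finally have "4 * ((r - 1) ^ 4 * (r - 2)) \<le> n ^ 2" using big by linarith
    moreover obtain k where "n = k + 4" using n4 by (metis add.commute le_Suc_ex)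
    then have "n ^ 2 \<le> 4 * ((n - 1) * (n - 2))" by (simp add: power2_eq_square algebra_simps)
    ultimately show ?thesis by linarith
  qed
  have "(r - 1) ^ 3 * ((n - 4) choose (r - 3)) * ((r - 1) * (r - 2))
      \<le> (r - 1) ^ 3 * ((n - 3) choose (r - 3)) * ((r - 1) * (r - 2))"
    using binomial_right_mono[of "n - 4" "n - 3" "r - 3"] by simp
  also have "\<dots> = ((r - 1) ^ 4 * (r - 2)) * ((n - 3) choose (r - 3))"
    by (simp only: power_Suc2[of _ 3, simplified] mult_ac)
  also have "\<dots> \<le> ((n - 1) * (n - 2)) * ((n - 3) choose (r - 3))" using powers by simp
  also have "\<dots> = ((n - 1) choose (r - 1)) * ((r - 1) * (r - 2))" using absorb by simp
  finally show ?thesis using r3 by simp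
qed

lemma meet_div_thru_le:
  assumes r2: "2 \<le> r" and n16: "16 * r^2 \<le> n"
    and avoiding: "(r - 1) ^ 3 * ((n - 4) choose (r - 3)) \<le> (n - 1) choose (r - 1)"
  shows "meet_bound n r / thru_bound n r \<le> 16 * real r ^ 2 / real n"
proof -
  define N where "N = real ((n - 1) choose (r - 1))"
  define h where "h = real (r * ((n - 2) choose (r - 2)))"
  define Y where "Y = real ((r - 1) ^ 3 * ((n - 4) choose (r - 3)))"
  have rn: "16 * real r ^ 2 \<le> real n" using n16 by (metis of_nat_le_iff of_nat_mult of_nat_numeral of_nat_power)
  have r0: "real r \<ge> 2" using r2 by simp
  have n64: "real n \<ge> 64" using rn power_mono[OF r0, of 2] by simp
  have "real (6 * r) \<le> N" unfolding N_def using six_mul_le_choose[OF r2 n16] by (simp only: of_nat_le_iff)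
  then have N6: "N \<ge> 6 * real r" by simp
  have N_pos: "N > 0" and N_half: "N - real (3 * r) \<ge> N / 2" using N6 r0 by auto
  have Y_le: "Y \<le> N" unfolding Y_def N_def using avoiding by (simp only: of_nat_le_iff)
  have h0: "h \<ge> 0" and Y0: "Y \<ge> 0" by (simp_all add: h_def Y_def)
  have n2: "2 \<le> n" using n64 by linarith
  have absorb: "real (n - 1) * real ((n - 2) choose (r - 2)) = real (r - 1) * N"
    using pred_mult_choose_pred[OF r2 n2] unfolding N_def by (metis of_nat_mult)
  have "h * real (n - 1) = real r * (real (n - 1) * real ((n - 2) choose (r - 2)))"
    unfolding h_def of_nat_mult by (simp only: mult_ac)
  also have "\<dots> = real r * real (r - 1) * N" unfolding absorb by (simp only: mult_ac)
  finally have h_eq: "h * (real n - 1) = real r * (real r - 1) * N"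
    using n2 r2 by (simp add: of_nat_diff)
  have "meet_bound n r / thru_bound n r = h * (N + Y) / (N - real (3 * r)) ^ 2"
    using N_half N_pos Y0 unfolding meet_bound_def thru_bound_def N_def[symmetric] h_def[symmetric] Y_def[symmetric]
    by (simp add: power2_eq_square field_simps)
  also have "\<dots> \<le> h * (2 * N) / (N / 2) ^ 2"
    using h0 N_pos N_half Y_le Y0 by (intro frac_le mult_left_mono power_mono) auto
  also have "\<dots> = 8 * real r * (real r - 1) / (real n - 1)"
    using N_pos n64 h_eq by (simp add: power2_eq_square field_simps)
  also have "\<dots> \<le> 16 * real r ^ 2 / real n"
  proof -
    have "16 * real r ^ 2 * (real n - 1) - 8 * real r * (real r - 1) * real n
        = 8 * real r * (real r * real n + real n - 2 * real r)" by (simp add: power2_eq_square algebra_simps)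
    also have "\<dots> \<ge> 0" using r0 n64 by (intro mult_nonneg_nonneg) (auto simp: algebra_simps intro: add_increasing mult_mono)
    finally show ?thesis using n64 by (simp add: field_simps)
  qed
  finally show ?thesis .
qed

lemma cond_bound_le_power:
  assumes r2: "2 \<le> r" and n16: "16 * r^2 \<le> n"
    and avoiding: "(r - 1) ^ 3 * ((n - 4) choose (r - 3)) \<le> (n - 1) choose (r - 1)"
  shows "cond_bound n r
    \<le> real ((r - 1) ^ 4 * ((n - 5) choose (r - 4))) * (16 * real r ^ 2 / real n) ^ (3 * r - 4)"
proof -
  have "3 * r < (n - 1) choose (r - 1)" using six_mul_le_choose[OF r2 n16] r2 by linarith
  then have "real (3 * r) < real ((n - 1) choose (r - 1))" by (simp only: of_nat_less_iff)
  then have "0 \<le> meet_bound n r / thru_bound n r"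
    by (simp add: meet_bound_def thru_bound_def)
  then show ?thesis
    unfolding cond_bound_def
    by (intro mult_left_mono power_mono meet_div_thru_le[OF r2 n16 avoiding]) simp_all
qed

lemma cond_bound_le_small_r:
  assumes r2: "2 \<le> r" and r3: "r \<le> 3" and n16: "16 * r^2 \<le> n"
    and avoiding: "(r - 1) ^ 3 * ((n - 4) choose (r - 3)) \<le> (n - 1) choose (r - 1)"
  shows "cond_bound n r \<le> 16 * 144^2 / real n ^ 2"
proof -
  define \<rho> where "\<rho> = 16 * real r ^ 2 / real n"
  have "real (16 * r^2) \<le> real n" using n16 by (simp only: of_nat_le_iff)
  then have rn: "16 * real r ^ 2 \<le> real n" by simp
  have "4 \<le> r ^ 2" using power_mono[OF r2, of 2] by simp
  then have "0 < n" using n16 by linarith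
  then have n_pos: "real n > 0" by simp
  have \<rho>_nonneg: "0 \<le> \<rho>" and \<rho>_le_1: "\<rho> \<le> 1" using rn n_pos by (simp_all add: \<rho>_def)
  have "real r ^ 2 \<le> 3 ^ 2" using r3 by (intro power_mono) simp_all
  then have \<rho>_le: "\<rho> \<le> 144 / real n" unfolding \<rho>_def by (intro divide_right_mono) simp_all
  have "(r - 1) ^ 4 \<le> 2 ^ 4" using r3 by (intro power_mono) simp_all
  then have "(r - 1) ^ 4 * ((n - 5) choose (r - 4)) \<le> 16" using r3 by simp
  then have petals: "real ((r - 1) ^ 4 * ((n - 5) choose (r - 4))) \<le> 16"
    by (metis of_nat_le_iff of_nat_numeral)
  have "\<rho> ^ (3 * r - 4) \<le> \<rho> ^ 2" using r2 \<rho>_nonneg \<rho>_le_1 by (intro power_decreasing) simp_all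
  also have "\<dots> \<le> (144 / real n) ^ 2" using \<rho>_nonneg \<rho>_le by (intro power_mono)
  finally have "real ((r - 1) ^ 4 * ((n - 5) choose (r - 4))) * \<rho> ^ (3 * r - 4) \<le> 16 * (144 / real n) ^ 2"
    using petals \<rho>_nonneg by (intro mult_mono) simp_all
  then show ?thesis
    using cond_bound_le_power[OF r2 n16 avoiding] by (simp add: \<rho>_def power_divide)
qed

lemma power_div_fact_le_one:
  assumes r4: "4 \<le> r" and big: "61440 * real r ^ 5 \<le> real n ^ 2"
  shows "(16^3 * real r ^ 6 / real n ^ 2) ^ (r - 4) / fact (r - 4) \<le> 1"
proof (cases "r = 4")
  case True
  then show ?thesis by simp
next
  case False
  define p where "p = r - 4"
  define y where "y = 16^3 * real r ^ 6 / real n ^ 2"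
  have p1: "1 \<le> p" and rp: "real r \<le> 5 * real p" using False r4 by (simp_all add: p_def)
  have "0 < 61440 * real r ^ 5" using r4 by simp
  then have n_pos: "0 < real n ^ 2" using big by linarith
  have "real r ^ 6 = real r ^ 5 * real r" using power_add[of "real r" 5 1] by simp
  also have "\<dots> \<le> real r ^ 5 * (5 * real p)" using rp by (intro mult_left_mono) simp_all
  finally have "exp 1 * (16^3 * real r ^ 6) \<le> 3 * (16^3 * (real r ^ 5 * (5 * real p)))"
    using exp_le by (intro mult_mono) simp_all
  also have "\<dots> = real p * (61440 * real r ^ 5)" by simp
  also have "\<dots> \<le> real p * real n ^ 2" using big by (intro mult_left_mono) simp_all
  finally have "exp 1 * (16^3 * real r ^ 6) \<le> real p * real n ^ 2" .
  then have "exp 1 * y / real p \<le> 1"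
    using p1 n_pos by (simp add: y_def pos_divide_le_eq mult.commute)
  moreover have "0 \<le> y" by (simp add: y_def)
  ultimately have "(exp 1 * y / real p) ^ p \<le> 1" by (intro power_le_one) simp_all
  then have "y ^ p / fact p \<le> 1" using power_div_fact_le[OF \<open>0 \<le> y\<close> p1] by linarith
  then show ?thesis unfolding y_def p_def .
qed

lemma cond_bound_le_large_r:
  assumes r4: "4 \<le> r" and n16: "16 * r^2 \<le> n"
    and avoiding: "(r - 1) ^ 3 * ((n - 4) choose (r - 3)) \<le> (n - 1) choose (r - 1)"
    and big: "61440 * real r ^ 5 \<le> real n ^ 2"
  shows "cond_bound n r \<le> 16^8 * real r ^ 20 / real n ^ 8"
proof -
  define \<rho> where "\<rho> = 16 * real r ^ 2 / real n"
  define p where "p = r - 4"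
  define y where "y = 16^3 * real r ^ 6 / real n ^ 2"
  have r2: "2 \<le> r" using r4 by simp
  have \<rho>_nonneg: "0 \<le> \<rho>" by (simp add: \<rho>_def)
  have "0 < r ^ 2" using r4 by simp
  then have "0 < n" using n16 by linarith
  then have n_pos: "real n > 0" by simp
  have petals: "real ((r - 1) ^ 4 * ((n - 5) choose (r - 4))) \<le> real r ^ 4 * (real n ^ p / fact p)"
    unfolding of_nat_mult p_def
    by (intro mult_mono choose_le_power_div_fact) (simp_all add: power_mono)
  have "cond_bound n r \<le> real ((r - 1) ^ 4 * ((n - 5) choose (r - 4))) * \<rho> ^ (3 * r - 4)"
    unfolding \<rho>_def by (rule cond_bound_le_power[OF r2 n16 avoiding])
  also have "\<dots> \<le> real r ^ 4 * (real n ^ p / fact p) * \<rho> ^ (3 * r - 4)"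
    using \<rho>_nonneg by (intro mult_right_mono[OF petals]) simp
  also have "\<dots> = real r ^ 4 * \<rho> ^ 8 * (y ^ p / fact p)"
  proof -
    have "3 * r - 4 = 3 * p + 8" using r4 by (simp add: p_def)
    then have rho_K: "\<rho> ^ (3 * r - 4) = (\<rho> ^ 3) ^ p * \<rho> ^ 8" by (simp add: power_add power_mult)
    have "\<rho> ^ 3 = 16^3 * real r ^ 6 / real n ^ 3"
      unfolding \<rho>_def by (simp add: power_divide power_mult_distrib flip: power_mult)
    then have "real n * \<rho> ^ 3 = y"
      using n_pos unfolding y_def by (simp add: power3_eq_cube power2_eq_square)
    then have "y ^ p = real n ^ p * (\<rho> ^ 3) ^ p" by (simp flip: power_mult_distrib)
    then show ?thesis unfolding rho_K by (simp add: mult_ac)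
  qed
  also have "\<dots> \<le> real r ^ 4 * \<rho> ^ 8"
    using power_div_fact_le_one[OF r4 big] \<rho>_nonneg
    by (intro mult_left_le) (simp_all add: y_def p_def)
  also have "\<dots> = 16^8 * real r ^ 20 / real n ^ 8"
    unfolding \<rho>_def by (simp add: power_divide power_mult_distrib flip: power_mult power_add)
  finally show ?thesis .
qed

lemma sixteen_mul_sq_le:
  assumes big: "61440 * real r ^ 5 \<le> real n ^ 2"
  shows "16 * r^2 \<le> n"
proof -
  have "real (16 * r^2) ^ 5 = 16^5 * (real r ^ 5) ^ 2"
    by (simp add: power_mult_distrib flip: power_mult)
  also have "\<dots> \<le> 16^5 * (real n ^ 2 / 61440) ^ 2"
    using big by (intro mult_left_mono power_mono) simp_all
  also have "\<dots> \<le> real n ^ 4" by (simp add: power_divide flip: power_mult)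
  also have "\<dots> \<le> real n ^ 5" by (cases "n = 0") (simp_all add: power_increasing)
  finally have "real (16 * r^2) \<le> real n" using power_mono_iff[of _ _ 5] by (metis of_nat_0_le_iff zero_less_numeral)
  then show ?thesis by (simp only: of_nat_le_iff)
qed

lemma cond_prob_D_le:
  assumes r2: "2 \<le> r" and n_pos: "0 < n" and small: "real r ^ 5 / real n ^ 2 < 1 / 61440"
  shows "measure_pmf.prob (proc n r (3 * r)) {F. evD n r F \<and> evB (3 * r) F \<and> evA 4 F}
       / measure_pmf.prob (proc n r (3 * r)) {F. evB (3 * r) F \<and> evA 4 F}
    \<le> 16^8 * (real r ^ 5 / real n ^ 2) ^ 4 + 16 * 144^2 * inverse (real n) ^ 2"
proof -
  have "real r ^ 5 < 1 / 61440 * real n ^ 2" using small n_pos by (simp add: pos_divide_less_eq)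
  then have big: "61440 * real r ^ 5 \<le> real n ^ 2" by linarith
  have n16: "16 * r^2 \<le> n" by (rule sixteen_mul_sq_le[OF big])
  have "4 \<le> r ^ 2" using power_mono[OF r2, of 2] by simp
  then have n4: "4 \<le> n" using n16 by linarith
  have "4 * real r ^ 5 \<le> 61440 * real r ^ 5" by simp
  then have "4 * real r ^ 5 \<le> real n ^ 2" using big by linarith
  then have "real (4 * r ^ 5) \<le> real (n ^ 2)" by simp
  then have avoiding: "(r - 1) ^ 3 * ((n - 4) choose (r - 3)) \<le> (n - 1) choose (r - 1)"
    by (intro avoiding_count_le_choose[OF r2 n4]) (simp only: of_nat_le_iff)
  have "3 * r < (n - 1) choose (r - 1)" using six_mul_le_choose[OF r2 n16] r2 by linarith
  then have many_thru: "real (3 * r) < real ((n - 1) choose (r - 1))" by (simp only: of_nat_less_iff)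
  have "cond_bound n r \<le> 16^8 * (real r ^ 5 / real n ^ 2) ^ 4 + 16 * 144^2 / real n ^ 2"
  proof (cases "r \<le> 3")
    case True
    have "0 \<le> 16^8 * (real r ^ 5 / real n ^ 2) ^ 4" by simp
    then show ?thesis using cond_bound_le_small_r[OF r2 True n16 avoiding] by linarith
  next
    case False
    then have "cond_bound n r \<le> 16^8 * real r ^ 20 / real n ^ 8"
      using cond_bound_le_large_r[OF _ n16 avoiding big] by simp
    moreover have "16^8 * real r ^ 20 / real n ^ 8 = 16^8 * (real r ^ 5 / real n ^ 2) ^ 4"
      by (simp add: power_divide flip: power_mult)
    moreover have "0 \<le> 16 * 144^2 / real n ^ 2" by simp
    ultimately show ?thesis by linarith
  qed
  then show ?thesis
    using cond_prob_D_le_cond_bound[OF r2 many_thru] by (simp add: power_inverse divide_inverse)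
qed

lemma fifth_power_div_sq_tendsto_0:
  fixes r :: "nat \<Rightarrow> nat"
  assumes "(\<lambda>n. real (r n)) \<in> o(\<lambda>n. real n powr (2/5))"
  shows "((\<lambda>n. real (r n) ^ 5 / real n ^ 2) \<longlongrightarrow> 0) at_top"
proof -
  have "(\<lambda>n. real (r n) ^ 5) \<in> o(\<lambda>n. (real n powr (2/5)) ^ 5)"
    by (rule landau_o.small_power[OF assms]) simp
  then have "((\<lambda>n. real (r n) ^ 5 / (real n powr (2/5)) ^ 5) \<longlongrightarrow> 0) at_top"
    by (rule smalloD_tendsto)
  moreover have "\<forall>\<^sub>F n in at_top. real (r n) ^ 5 / (real n powr (2/5)) ^ 5 = real (r n) ^ 5 / real n ^ 2"
    using eventually_gt_at_top[of "0::nat"]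
  proof eventually_elim
    case (elim n)
    then have "(real n powr (2/5)) ^ 5 = real n powr (real 2)" by (simp add: powr_power)
    also have "\<dots> = real n ^ 2" using elim by (intro powr_realpow) simp
    finally show ?case by simp
  qed
  ultimately show ?thesis by (rule Lim_transform_eventually)
qed

theorem lemma6:
  fixes r :: "nat \<Rightarrow> nat"
  assumes "\<And>n. r n \<ge> 2"
    and "(\<lambda>n. real (r n)) \<in> o(\<lambda>n. real n powr (2/5))"
  shows "((\<lambda>n. measure_pmf.prob (proc n (r n) (3 * r n))
                  {F. evD n (r n) F \<and> evB (3 * r n) F \<and> evA 4 F}
              / measure_pmf.prob (proc n (r n) (3 * r n))
                  {F. evB (3 * r n) F \<and> evA 4 F}) \<longlongrightarrow> 0) at_top"
proof -
  define t where "t n = real (r n) ^ 5 / real n ^ 2" for n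
  define B where "B n = 16^8 * t n ^ 4 + 16 * 144^2 * inverse (real n) ^ 2" for n
  have t_lim: "(t \<longlongrightarrow> 0) at_top"
    unfolding t_def by (rule fifth_power_div_sq_tendsto_0[OF assms(2)])
  have "(B \<longlongrightarrow> 16^8 * 0 ^ 4 + 16 * 144^2 * 0 ^ 2) at_top"
    unfolding B_def by (intro tendsto_intros t_lim lim_inverse_n)
  then have B_lim: "(B \<longlongrightarrow> 0) at_top" by simp
  have "\<forall>\<^sub>F n in at_top. t n < 1 / 61440 \<and> 0 < n"
    using eventually_conj[OF order_tendstoD(2)[OF t_lim, of "1 / 61440"] eventually_gt_at_top[of 0]]
    by simp
  then have upper: "\<forall>\<^sub>F n in at_top. measure_pmf.prob (proc n (r n) (3 * r n))
                  {F. evD n (r n) F \<and> evB (3 * r n) F \<and> evA 4 F}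
              / measure_pmf.prob (proc n (r n) (3 * r n))
                  {F. evB (3 * r n) F \<and> evA 4 F} \<le> B n"
  proof eventually_elim
    case (elim n)
    then show ?case using cond_prob_D_le[OF assms(1)[of n], of n] unfolding B_def t_def by blast
  qed
  show ?thesis by (rule tendsto_sandwich[OF _ upper tendsto_const B_lim]) simp
qed

end
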